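(* $R_{static}\le R^{go}_\infty\le R^{go}_B\le R^{go}_1\le R^{ub}$ for every $B\in\mathbb N$.
   Context: Let $\mathcal X$ be a finite set, $\Delta_{\mathcal X}$ the set of probability distributions on $\mathcal X$, and $\Delta_K$ the probability simplex on $[K]$. A bandit is $\nu=(\nu_a)_{a\in[K]}\in(\Delta_{\mathcal X})^K$, all arm distributions having full support on $\mathcal X$; $D$ is KL divergence. Let $\xi_1,\dots,\xi_K$ be pairwise disjoint nonempty compact sets of bandits, $\xi=\bigcup_i\xi_i$, $i^*(\nu)=i$ iff $\nu\in\xi_i$. For $B\in\mathbb N$, with sample paths $Q^B=(Q_1,\dots,Q_B)$, $Q_l=(Q_{l,a})_a\in(\Delta_{\mathcal X})^K$, $Q^l=(Q_1,\dots,Q_l)$, allocation rules $r^B=(r_1,\dots,r_B)$ with $r_l:((\Delta_{\mathcal X})^K)^l\to\Delta_K$ arbitrary, and decision rules $J:((\Delta_{\mathcal X})^K)^B\to[K]$ arbitrary, define $$R^{go}_B=\sup_{r^B,J}\inf_{Q^B}\inf_{\nu\in\xi:\,i^*(\nu)\ne J(Q^B)}\frac1B\sum_{l=1}^B\sum_{a}r_l(Q^l)(a)D(Q_{l,a}\|\nu_a),$$ and $R^{go}_\infty=\lim_{B\to\infty}R^{go}_B$ (this limit is known to exist and to equal $\inf_{B}R^{go}_B$). Define $$R_{static}=\sup_{w\in\Delta_K}\ \inf_{a\neq a'}\ \inf_{\nu\in\xi_a,\nu'\in\xi_{a'}}\ \max_{s\in[0,1]}\ -\sum_{b\in[K]}w_b\log\Big(\sum_{x\in\mathcal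 X}\nu'_b(x)^s\nu_b(x)^{1-s}\Big),$$ the Chernoff information $C(p,q)=\max_{s\in[0,1]}-\log\sum_{x}q(x)^sp(x)^{1-s}$, and $$R^{ub}=\inf_{a\neq a'}\ \inf_{\nu\in\xi_a,\nu'\in\xi_{a'}}\ \max_{b\in[K]}C(\nu_b,\nu'_b).$$ *)

theory Defs
  imports "HOL-Analysis.Analysis"
begin

text \<open>Outcome alphabet: a finite type 'x.  Arms: a finite type 'k, so [K] is 'k and K = CARD('k).
  Probability vectors on a finite type.\<close>

definition prob_vec :: "('a::finite \<Rightarrow> real) \<Rightarrow> bool" where
  "prob_vec p \<longleftrightarrow> (\<forall>x. 0 \<le> p x) \<and> sum p UNIV = 1"

definition bandit :: "('k::finite \<Rightarrow> 'x::finite \<Rightarrow> real) \<Rightarrow> bool" where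
  "bandit \<nu> \<longleftrightarrow> (\<forall>a. prob_vec (\<nu> a) \<and> (\<forall>x. 0 < \<nu> a x))"

definition KL :: "('x::finite \<Rightarrow> real) \<Rightarrow> ('x \<Rightarrow> real) \<Rightarrow> real" where
  "KL p q = (\<Sum>x\<in>UNIV. if p x = 0 then 0 else p x * ln (p x / q x))"

definition chernoff :: "('x::finite \<Rightarrow> real) \<Rightarrow> ('x \<Rightarrow> real) \<Rightarrow> ereal" where
  "chernoff p q = (SUP s\<in>{0..1::real}. ereal (- ln (\<Sum>x\<in>UNIV. q x powr s * p x powr (1 - s))))"

text \<open>A sample path Q^B is a list of length B of elements of (Delta_X)^K;
  the allocation rules r_1..r_B are encoded by one function r on lists, r_l(Q^l) = r (take l Q)
  (the length of the argument determines l).  The inner infimum is over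
  bandits nu in xi with i*(nu) \<noteq> J, i.e. over the union of xi i for i \<noteq> J.\<close>

definition go_cost :: "(('k::finite \<Rightarrow> 'x::finite \<Rightarrow> real) list \<Rightarrow> ('k \<Rightarrow> real)) \<Rightarrow> nat
     \<Rightarrow> ('k \<Rightarrow> 'x \<Rightarrow> real) list \<Rightarrow> ('k \<Rightarrow> 'x \<Rightarrow> real) \<Rightarrow> real" where
  "go_cost r B Q \<nu> = (1 / real B) *
     (\<Sum>l<B. \<Sum>a\<in>UNIV. r (take (Suc l) Q) a * KL ((Q ! l) a) (\<nu> a))"

definition R_go :: "('k::finite \<Rightarrow> ('k \<Rightarrow> 'x::finite \<Rightarrow> real) set) \<Rightarrow> nat \<Rightarrow> ereal" where
  "R_go \<xi> B =
     (SUP rJ \<in> {(r, J). \<forall>xs. prob_vec (r xs)}.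
        INF Q \<in> {Q. length Q = B \<and> (\<forall>q\<in>set Q. \<forall>a. prob_vec (q a))}.
          INF \<nu> \<in> (\<Union>i\<in>- {snd rJ Q}. \<xi> i). ereal (go_cost (fst rJ) B Q \<nu>))"

definition R_go_inf :: "('k::finite \<Rightarrow> ('k \<Rightarrow> 'x::finite \<Rightarrow> real) set) \<Rightarrow> ereal" where
  "R_go_inf \<xi> = lim (\<lambda>B. R_go \<xi> B)"

definition R_static :: "('k::finite \<Rightarrow> ('k \<Rightarrow> 'x::finite \<Rightarrow> real) set) \<Rightarrow> ereal" where
  "R_static \<xi> =
     (SUP w \<in> {w. prob_vec w}.
        INF aa' \<in> {(a, a'). a \<noteq> a'}.
          INF \<nu>\<nu>' \<in> \<xi> (fst aa') \<times> \<xi> (snd aa').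
            SUP s\<in>{0..1::real}.
              ereal (- (\<Sum>b\<in>UNIV. w b *
                 ln (\<Sum>x\<in>UNIV. (snd \<nu>\<nu>') b x powr s * (fst \<nu>\<nu>') b x powr (1 - s)))))"

definition R_ub :: "('k::finite \<Rightarrow> ('k \<Rightarrow> 'x::finite \<Rightarrow> real) set) \<Rightarrow> ereal" where
  "R_ub \<xi> =
     (INF aa' \<in> {(a, a'). a \<noteq> a'}.
        INF \<nu>\<nu>' \<in> \<xi> (fst aa') \<times> \<xi> (snd aa').
          Max (range (\<lambda>b. chernoff ((fst \<nu>\<nu>') b) ((snd \<nu>\<nu>') b))))"

end

theory Submission
  imports Defs
begin

(* Everything rests on the variational formula
     - ln (\<Sum>x. q x powr s * p x powr (1 - s)) = min over r of (1 - s) KL(r, p) + s KL(r, q),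
   the minimum being attained at the tilted distribution r \<propto> q powr s * p powr (1 - s).
   Lower bound: keep a fixed allocation w and answer the class containing the bandit closest
   (in w-weighted KL) to the observed path.  A bandit \<nu> of another class is then no closer than
   the best fit \<nu>' of the answered class, and the formula, applied arm by arm, bounds the static
   rate of (\<nu>', \<nu>) by the larger of the two costs.
   Upper bound: after one round, nature answers with the arm-wise tilted distributions that are
   equidistant from two bandits of different classes, so every decision costs at most
   max_b C(\<nu>_b, \<nu>'_b).
   Monotonicity and the limit: a B-round strategy is simulated in B' rounds by repeating every
   sample over a block of about B / B' rounds and averaging the allocations of the block, which
   gives R_go B \<le> (1 + B' / B) R_go B'.  For B' = 1 this is R_go B \<le> R_go 1, and letting
   B \<rightarrow> \<infinity> shows that the limit exists and is the infimum over B. *)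

section \<open>Kullback--Leibler divergence and the Chernoff coefficient\<close>

lemma KL_full_support:
  assumes "\<And>x. 0 < r x"
  shows "KL r p = (\<Sum>x\<in>UNIV. r x * ln (r x / p x))"
  unfolding KL_def using assms by (simp add: less_imp_neq[symmetric])

lemma KL_self:
  assumes "\<And>x. 0 < p x"
  shows "KL p p = 0"
  using assms by (simp add: KL_full_support less_imp_neq[symmetric])

lemma KL_nonneg:
  assumes r: "prob_vec r" and p: "prob_vec p" "\<And>x. 0 < p x"
  shows "0 \<le> KL r p"
proof -
  have term_ge: "r x - p x \<le> (if r x = 0 then 0 else r x * ln (r x / p x))" for x
  proof (cases "r x = 0")
    case True
    then show ?thesis using p(2)[of x] by simp
  next
    case False
    then have rx: "0 < r x" using r unfolding prob_vec_def by (metis order_le_less)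
    have "ln (p x / r x) \<le> p x / r x - 1"
      using rx p(2)[of x] by (intro ln_le_minus_one) simp
    then have "r x * (1 - p x / r x) \<le> r x * ln (r x / p x)"
      using rx p(2)[of x] by (intro mult_left_mono) (simp_all add: ln_div)
    then show ?thesis using False rx by (simp add: algebra_simps)
  qed
  have "0 = (\<Sum>x\<in>UNIV. r x - p x)"
    using r p(1) by (simp add: prob_vec_def sum_subtractf)
  also have "\<dots> \<le> KL r p"
    unfolding KL_def by (rule sum_mono) (rule term_ge)
  finally show ?thesis .
qed

definition chernoff_coeff :: "('x::finite \<Rightarrow> real) \<Rightarrow> ('x \<Rightarrow> real) \<Rightarrow> real \<Rightarrow> real" where
  "chernoff_coeff p q s = (\<Sum>x\<in>UNIV. q x powr s * p x powr (1 - s))"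

definition tilted :: "('x::finite \<Rightarrow> real) \<Rightarrow> ('x \<Rightarrow> real) \<Rightarrow> real \<Rightarrow> 'x \<Rightarrow> real" where
  "tilted p q s x = q x powr s * p x powr (1 - s) / chernoff_coeff p q s"

context
  fixes p q :: "'x::finite \<Rightarrow> real"
  assumes p_pos: "\<And>x. 0 < p x" and q_pos: "\<And>x. 0 < q x"
begin

lemma chernoff_coeff_pos: "0 < chernoff_coeff p q s"
  unfolding chernoff_coeff_def using p_pos q_pos
  by (intro sum_pos mult_pos_pos) (auto simp: less_imp_neq[symmetric])

lemma tilted_pos: "0 < tilted p q s x"
  unfolding tilted_def using p_pos q_pos chernoff_coeff_pos
  by (intro divide_pos_pos mult_pos_pos) (auto simp: less_imp_neq[symmetric])

lemma prob_vec_tilted: "prob_vec (tilted p q s)"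
  using tilted_pos chernoff_coeff_pos[of s]
  unfolding prob_vec_def tilted_def by (simp add: less_imp_le flip: sum_divide_distrib chernoff_coeff_def)

lemma ln_tilted: "ln (tilted p q s x) = s * ln (q x) + (1 - s) * ln (p x) - ln (chernoff_coeff p q s)"
  using p_pos[of x] q_pos[of x] chernoff_coeff_pos[of s]
  by (simp add: tilted_def ln_div ln_mult)

lemma tilted_0: "prob_vec p \<Longrightarrow> tilted p q 0 = p"
  using p_pos q_pos by (auto simp: tilted_def chernoff_coeff_def prob_vec_def fun_eq_iff less_imp_neq[symmetric])

lemma tilted_1: "prob_vec q \<Longrightarrow> tilted p q 1 = q"
  using p_pos q_pos by (auto simp: tilted_def chernoff_coeff_def prob_vec_def fun_eq_iff less_imp_neq[symmetric])

lemma KL_mix_eq: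
  assumes r: "prob_vec r"
  shows "(1 - s) * KL r p + s * KL r q = KL r (tilted p q s) - ln (chernoff_coeff p q s)"
proof -
  let ?Z = "ln (chernoff_coeff p q s)"
  have term_eq: "(1 - s) * (if r x = 0 then 0 else r x * ln (r x / p x))
      + s * (if r x = 0 then 0 else r x * ln (r x / q x))
      = (if r x = 0 then 0 else r x * ln (r x / tilted p q s x)) - r x * ?Z" for x
  proof (cases "r x = 0")
    case False
    then have "0 < r x" using r unfolding prob_vec_def by (metis order_le_less)
    then show ?thesis
      using False p_pos[of x] q_pos[of x] tilted_pos[of s x]
      by (simp add: ln_div ln_tilted algebra_simps)
  qed simp
  have "(1 - s) * KL r p + s * KL r q
      = (\<Sum>x\<in>UNIV. (if r x = 0 then 0 else r x * ln (r x / tilted p q s x)) - r x * ?Z)"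
    unfolding KL_def sum_distrib_left sum.distrib[symmetric] term_eq ..
  also have "\<dots> = KL r (tilted p q s) - ?Z"
    using r by (simp add: KL_def prob_vec_def sum_subtractf flip: sum_distrib_right)
  finally show ?thesis .
qed

lemma neg_ln_chernoff_coeff_le:
  assumes "prob_vec r"
  shows "- ln (chernoff_coeff p q s) \<le> (1 - s) * KL r p + s * KL r q"
  using KL_nonneg[OF assms prob_vec_tilted tilted_pos] KL_mix_eq[OF assms] by simp

lemma KL_tilted_mix:
  "(1 - s) * KL (tilted p q s) p + s * KL (tilted p q s) q = - ln (chernoff_coeff p q s)"
  using KL_mix_eq[OF prob_vec_tilted] KL_self[OF tilted_pos] by simp

lemma continuous_on_KL_tilted:
  assumes u: "\<And>x. 0 < u x"
  shows "continuous_on A (\<lambda>s. KL (tilted p q s) u)"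
proof -
  have "continuous_on A (\<lambda>s. \<Sum>x\<in>UNIV. tilted p q s x * ln (tilted p q s x / u x))"
    using p_pos q_pos u chernoff_coeff_pos tilted_pos
    unfolding tilted_def chernoff_coeff_def
    by (intro continuous_intros) (auto simp: less_imp_neq[symmetric])
  then show ?thesis by (simp add: KL_full_support[OF tilted_pos])
qed

text \<open>The tilted distribution runs from \<open>p\<close> to \<open>q\<close>, so by the intermediate value
  theorem it is equidistant from both for some parameter; there both divergences equal the
  Chernoff exponent.\<close>

lemma KL_tilted_eq_neg_ln_chernoff_coeff:
  assumes p: "prob_vec p" and q: "prob_vec q"
  obtains s where "s \<in> {0..1}"
    and "KL (tilted p q s) p = - ln (chernoff_coeff p q s)"
    and "KL (tilted p q s) q = - ln (chernoff_coeff p q s)"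
proof -
  define g where "g s = KL (tilted p q s) p - KL (tilted p q s) q" for s
  have "g 0 \<le> 0"
    using KL_nonneg[OF p q q_pos] by (simp add: g_def tilted_0[OF p] KL_self[OF p_pos])
  moreover have "0 \<le> g 1"
    using KL_nonneg[OF q p p_pos] by (simp add: g_def tilted_1[OF q] KL_self[OF q_pos])
  moreover have "continuous_on {0..1} g"
    unfolding g_def using p_pos q_pos by (intro continuous_intros continuous_on_KL_tilted)
  ultimately obtain s where "s \<in> {0..1}" "g s = 0"
    using IVT'[of g 0 0 1] by auto
  then show ?thesis
    using that KL_tilted_mix[of s] by (simp add: g_def algebra_simps)
qed

end


section \<open>Strategies of the identification game\<close>

definition sample_paths :: "nat \<Rightarrow> ('k::finite \<Rightarrow> 'x::finite \<Rightarrow> real) list set" where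
  "sample_paths B = {Q. length Q = B \<and> (\<forall>q\<in>set Q. \<forall>a. prob_vec (q a))}"

definition strategy_value :: "('k::finite \<Rightarrow> ('k \<Rightarrow> 'x::finite \<Rightarrow> real) set) \<Rightarrow> nat
    \<Rightarrow> (('k \<Rightarrow> 'x \<Rightarrow> real) list \<Rightarrow> 'k \<Rightarrow> real) \<Rightarrow> (('k \<Rightarrow> 'x \<Rightarrow> real) list \<Rightarrow> 'k) \<Rightarrow> ereal" where
  "strategy_value \<xi> B r J =
     (INF Q\<in>sample_paths B. INF \<nu>\<in>(\<Union>i\<in>- {J Q}. \<xi> i). ereal (go_cost r B Q \<nu>))"

lemma strategy_value_le_R_go:
  assumes "\<And>xs. prob_vec (r xs)"
  shows "strategy_value \<xi> B r J \<le> R_go \<xi> B"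
  unfolding R_go_def strategy_value_def sample_paths_def
  by (rule SUP_upper2[of "(r, J)"]) (use assms in auto)

lemma R_go_least:
  assumes "\<And>r J. (\<And>xs. prob_vec (r xs)) \<Longrightarrow> strategy_value \<xi> B r J \<le> z"
  shows "R_go \<xi> B \<le> z"
  unfolding R_go_def using assms
  by (intro SUP_least) (auto simp: strategy_value_def sample_paths_def)

definition alloc_cost :: "('k::finite \<Rightarrow> real) \<Rightarrow> ('k \<Rightarrow> 'x::finite \<Rightarrow> real) \<Rightarrow> ('k \<Rightarrow> 'x \<Rightarrow> real) \<Rightarrow> real" where
  "alloc_cost w q \<nu> = (\<Sum>a\<in>UNIV. w a * KL (q a) (\<nu> a))"

lemma go_cost_eq: "go_cost r B Q \<nu> = (\<Sum>l<B. alloc_cost (r (take (Suc l) Q)) (Q ! l) \<nu>) / real B"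
  unfolding go_cost_def alloc_cost_def by simp

lemma alloc_cost_nonneg:
  assumes "\<And>a. 0 \<le> w a" and "\<And>a. prob_vec (q a)" and "bandit \<nu>"
  shows "0 \<le> alloc_cost w q \<nu>"
  unfolding alloc_cost_def using assms
  by (auto intro!: sum_nonneg mult_nonneg_nonneg KL_nonneg simp: bandit_def)

lemma sum_prob_vec_le_Max:
  fixes w d :: "'k::finite \<Rightarrow> real"
  assumes "prob_vec w"
  shows "(\<Sum>b\<in>UNIV. w b * d b) \<le> Max (range d)"
proof -
  have "(\<Sum>b\<in>UNIV. w b * d b) \<le> (\<Sum>b\<in>UNIV. w b * Max (range d))"
    using assms by (intro sum_mono mult_left_mono) (auto simp: prob_vec_def)
  also have "\<dots> = Max (range d)"
    using assms by (simp add: prob_vec_def flip: sum_distrib_right)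
  finally show ?thesis .
qed

locale bandit_family =
  fixes \<xi> :: "'k::finite \<Rightarrow> ('k \<Rightarrow> 'x::finite \<Rightarrow> real) set"
  assumes bandits: "\<And>i \<nu>. \<nu> \<in> \<xi> i \<Longrightarrow> bandit \<nu>"


section \<open>The one-round game and the upper bound\<close>

text \<open>Nature's answer to every allocation: the arm-wise tilted distributions that are
  equidistant from \<open>\<nu>\<close> and \<open>\<nu>'\<close>.\<close>

lemma tilted_alloc_cost_le_chernoff:
  assumes "bandit \<nu>" "bandit \<nu>'"
  obtains q where "[q] \<in> sample_paths 1"
    and "\<And>w \<mu>. prob_vec w \<Longrightarrow> \<mu> \<in> {\<nu>, \<nu>'} \<Longrightarrow> ereal (alloc_cost w q \<mu>) \<le> (MAX b. chernoff (\<nu> b) (\<nu>' b))"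
proof -
  have "\<exists>s\<in>{0..1}. KL (tilted (\<nu> b) (\<nu>' b) s) (\<nu> b) = - ln (chernoff_coeff (\<nu> b) (\<nu>' b) s)
      \<and> KL (tilted (\<nu> b) (\<nu>' b) s) (\<nu>' b) = - ln (chernoff_coeff (\<nu> b) (\<nu>' b) s)" for b
    using assms unfolding bandit_def by (metis KL_tilted_eq_neg_ln_chernoff_coeff)
  then obtain s where s: "\<And>b. s b \<in> {0..1}"
    and KL_eq: "\<And>b. KL (tilted (\<nu> b) (\<nu>' b) (s b)) (\<nu> b) = - ln (chernoff_coeff (\<nu> b) (\<nu>' b) (s b))"
      "\<And>b. KL (tilted (\<nu> b) (\<nu>' b) (s b)) (\<nu>' b) = - ln (chernoff_coeff (\<nu> b) (\<nu>' b) (s b))"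
    by metis
  define q where "q b = tilted (\<nu> b) (\<nu>' b) (s b)" for b
  define D where "D b = - ln (chernoff_coeff (\<nu> b) (\<nu>' b) (s b))" for b
  have "[q] \<in> sample_paths 1"
    using assms by (auto simp: sample_paths_def q_def bandit_def intro: prob_vec_tilted)
  moreover have "alloc_cost w q \<mu> \<le> Max (range D)" if "prob_vec w" "\<mu> \<in> {\<nu>, \<nu>'}" for w \<mu>
  proof -
    have "alloc_cost w q \<mu> = (\<Sum>b\<in>UNIV. w b * D b)"
      using that(2) KL_eq by (auto simp: alloc_cost_def q_def D_def)
    also have "\<dots> \<le> Max (range D)" using that(1) by (rule sum_prob_vec_le_Max)
    finally show ?thesis .
  qed
  moreover have "ereal (Max (range D)) \<le> (MAX b. chernoff (\<nu> b) (\<nu>' b))"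
  proof -
    have "Max (range D) \<in> range D" by (rule Max_in) auto
    then obtain b0 where "Max (range D) = D b0" by blast
    also have "ereal (D b0) \<le> chernoff (\<nu> b0) (\<nu>' b0)"
      unfolding chernoff_def D_def chernoff_coeff_def using s[of b0] by (intro SUP_upper2) auto
    also have "\<dots> \<le> (MAX b. chernoff (\<nu> b) (\<nu>' b))" by (rule Max_ge) auto
    finally show ?thesis .
  qed
  ultimately show ?thesis
    using that by (meson ereal_less_eq(3) order.trans)
qed

context bandit_family
begin

lemma strategy_value_1_le_chernoff:
  assumes r: "\<And>xs. prob_vec (r xs)"
    and \<nu>: "\<nu> \<in> \<xi> a" and \<nu>': "\<nu>' \<in> \<xi> a'" and "a \<noteq> a'"
  shows "strategy_value \<xi> 1 r J \<le> (MAX b. chernoff (\<nu> b) (\<nu>' b))"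
proof -
  obtain q where q: "[q] \<in> sample_paths 1"
    and cost: "\<And>w \<mu>. prob_vec w \<Longrightarrow> \<mu> \<in> {\<nu>, \<nu>'}
      \<Longrightarrow> ereal (alloc_cost w q \<mu>) \<le> (MAX b. chernoff (\<nu> b) (\<nu>' b))"
    using tilted_alloc_cost_le_chernoff \<nu> \<nu>' bandits by metis
  have "\<exists>\<mu>\<in>{\<nu>, \<nu>'}. \<mu> \<in> (\<Union>i\<in>- {J [q]}. \<xi> i)"
    using \<nu> \<nu>' \<open>a \<noteq> a'\<close> by (cases "J [q] = a") auto
  then obtain \<mu> where \<mu>: "\<mu> \<in> {\<nu>, \<nu>'}" "\<mu> \<in> (\<Union>i\<in>- {J [q]}. \<xi> i)" by blast
  have "strategy_value \<xi> 1 r J \<le> ereal (go_cost r 1 [q] \<mu>)"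
    unfolding strategy_value_def by (rule INF_lower2[OF q]) (rule INF_lower[OF \<mu>(2)])
  also have "\<dots> \<le> (MAX b. chernoff (\<nu> b) (\<nu>' b))"
    using cost[OF r \<mu>(1)] by (simp add: go_cost_eq)
  finally show ?thesis .
qed

lemma R_go_1_le_R_ub: "R_go \<xi> 1 \<le> R_ub \<xi>"
  unfolding R_ub_def
  by (intro R_go_least INF_greatest) (auto simp del: One_nat_def intro!: strategy_value_1_le_chernoff)

end


section \<open>The static lower bound\<close>

definition static_rate :: "('k::finite \<Rightarrow> real) \<Rightarrow> ('k \<Rightarrow> 'x::finite \<Rightarrow> real) \<Rightarrow> ('k \<Rightarrow> 'x \<Rightarrow> real) \<Rightarrow> ereal" where
  "static_rate w \<nu> \<nu>' = (SUP s\<in>{0..1}. ereal (- (\<Sum>b\<in>UNIV. w b * ln (chernoff_coeff (\<nu> b) (\<nu>' b) s))))"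

definition static_value :: "('k::finite \<Rightarrow> ('k \<Rightarrow> 'x::finite \<Rightarrow> real) set) \<Rightarrow> ('k \<Rightarrow> real) \<Rightarrow> ereal" where
  "static_value \<xi> w = (INF aa'\<in>{(a, a'). a \<noteq> a'}. INF \<nu>\<nu>'\<in>\<xi> (fst aa') \<times> \<xi> (snd aa').
     static_rate w (fst \<nu>\<nu>') (snd \<nu>\<nu>'))"

lemma R_static_eq: "R_static \<xi> = (SUP w\<in>{w. prob_vec w}. static_value \<xi> w)"
  unfolding R_static_def static_value_def static_rate_def chernoff_coeff_def ..

lemma neg_sum_ln_chernoff_coeff_le_alloc_cost:
  assumes w: "prob_vec w" and q: "\<And>a. prob_vec (q a)" and "bandit \<nu>" "bandit \<nu>'"
  shows "- (\<Sum>b\<in>UNIV. w b * ln (chernoff_coeff (\<nu> b) (\<nu>' b) s))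
    \<le> (1 - s) * alloc_cost w q \<nu> + s * alloc_cost w q \<nu>'"
proof -
  have "- (\<Sum>b\<in>UNIV. w b * ln (chernoff_coeff (\<nu> b) (\<nu>' b) s))
      = (\<Sum>b\<in>UNIV. w b * - ln (chernoff_coeff (\<nu> b) (\<nu>' b) s))"
    by (simp add: sum_negf)
  also have "\<dots> \<le> (\<Sum>b\<in>UNIV. w b * ((1 - s) * KL (q b) (\<nu> b) + s * KL (q b) (\<nu>' b)))"
    using assms by (intro sum_mono mult_left_mono neg_ln_chernoff_coeff_le)
      (auto simp: bandit_def prob_vec_def)
  also have "\<dots> = (1 - s) * alloc_cost w q \<nu> + s * alloc_cost w q \<nu>'"
    unfolding alloc_cost_def sum_distrib_left sum.distrib[symmetric]
    by (rule sum.cong) (simp_all add: algebra_simps)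
  finally show ?thesis .
qed

lemma static_rate_le_go_cost:
  assumes w: "prob_vec w" and Q: "Q \<in> sample_paths B" and B: "B \<ge> 1"
    and \<nu>: "bandit \<nu>" "bandit \<nu>'"
  shows "static_rate w \<nu> \<nu>' \<le> max (ereal (go_cost (\<lambda>_. w) B Q \<nu>)) (ereal (go_cost (\<lambda>_. w) B Q \<nu>'))"
  unfolding static_rate_def
proof (rule SUP_least)
  fix s :: real assume s: "s \<in> {0..1}"
  let ?V = "- (\<Sum>b\<in>UNIV. w b * ln (chernoff_coeff (\<nu> b) (\<nu>' b) s))"
  let ?mix = "\<lambda>l. (1 - s) * alloc_cost w (Q ! l) \<nu> + s * alloc_cost w (Q ! l) \<nu>'"
  have "?V = (\<Sum>l<B. ?V) / real B" using B by simp
  also have "\<dots> \<le> (\<Sum>l<B. ?mix l) / real B"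
    using Q by (intro divide_right_mono sum_mono neg_sum_ln_chernoff_coeff_le_alloc_cost w \<nu>)
      (auto simp: sample_paths_def)
  also have "\<dots> = (1 - s) * go_cost (\<lambda>_. w) B Q \<nu> + s * go_cost (\<lambda>_. w) B Q \<nu>'"
    by (simp add: go_cost_eq sum.distrib add_divide_distrib flip: sum_distrib_left)
  also have "\<dots> \<le> max (go_cost (\<lambda>_. w) B Q \<nu>) (go_cost (\<lambda>_. w) B Q \<nu>')"
    using s by (intro convex_bound_le) auto
  finally show "ereal ?V \<le> max (ereal (go_cost (\<lambda>_. w) B Q \<nu>)) (ereal (go_cost (\<lambda>_. w) B Q \<nu>'))"
    by (auto simp: le_max_iff_disj)
qed

context bandit_family
begin

lemma static_value_le_strategy_value:
  assumes B: "B \<ge> 1" and w: "prob_vec w"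
  defines "J \<equiv> \<lambda>Q. arg_min_on (\<lambda>i. INF \<nu>\<in>\<xi> i. ereal (go_cost (\<lambda>_. w) B Q \<nu>)) UNIV"
  shows "static_value \<xi> w \<le> strategy_value \<xi> B (\<lambda>_. w) J"
  unfolding strategy_value_def
proof (intro INF_greatest, elim UN_E)
  fix Q \<nu> i assume Q: "Q \<in> sample_paths B" and i: "i \<in> - {J Q}" and \<nu>: "\<nu> \<in> \<xi> i"
  define cost where "cost \<mu> = ereal (go_cost (\<lambda>_. w) B Q \<mu>)" for \<mu>
  have "(INF \<mu>\<in>\<xi> (J Q). cost \<mu>) \<le> (INF \<mu>\<in>\<xi> i. cost \<mu>)"
    unfolding J_def cost_def by (rule arg_min_least) auto
  also have "\<dots> \<le> cost \<nu>" using \<nu> by (rule INF_lower)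
  finally have best_fit: "(INF \<mu>\<in>\<xi> (J Q). cost \<mu>) \<le> cost \<nu>" .
  have "static_value \<xi> w \<le> max (cost \<mu>) (cost \<nu>)" if \<mu>: "\<mu> \<in> \<xi> (J Q)" for \<mu>
  proof -
    have "static_value \<xi> w \<le> static_rate w \<mu> \<nu>"
      unfolding static_value_def using i \<mu> \<nu>
      by (intro INF_lower2[of "(J Q, i)"] INF_lower2[of "(\<mu>, \<nu>)"]) auto
    also have "\<dots> \<le> max (cost \<mu>) (cost \<nu>)"
      unfolding cost_def using bandits \<mu> \<nu> by (intro static_rate_le_go_cost[OF w Q B])
    finally show ?thesis .
  qed
  \<comment> \<open>Otherwise the static value would bound all costs in class \<open>J Q\<close>, hence \<open>cost \<nu>\<close>.\<close>
  then have "static_value \<xi> w \<le> cost \<nu> \<or> static_value \<xi> w \<le> (INF \<mu>\<in>\<xi> (J Q). cost \<mu>)"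
    by (metis INF_greatest le_max_iff_disj)
  then show "static_value \<xi> w \<le> ereal (go_cost (\<lambda>_. w) B Q \<nu>)"
    using best_fit unfolding cost_def by auto
qed

lemma R_static_le_R_go:
  assumes "B \<ge> 1"
  shows "R_static \<xi> \<le> R_go \<xi> B"
  unfolding R_static_eq
  by (intro SUP_least order.trans[OF static_value_le_strategy_value[OF assms]] strategy_value_le_R_go)
    simp_all

end


section \<open>Simulating many rounds by few\<close>

lemma INF_ereal_cmult:
  assumes "0 < c"
  shows "(INF x\<in>A. ereal c * f x) = ereal c * (INF x\<in>A. f x)"
proof -
  have "{ereal c * y |y. y \<in> f ` A} = (\<lambda>x. ereal c * f x) ` A" by auto
  then show ?thesis using ereal_Inf_cmult[OF assms, of "\<lambda>y. y \<in> f ` A"] by simp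
qed

lemma prob_vec_average:
  assumes "finite S" "S \<noteq> {}" "\<And>i. i \<in> S \<Longrightarrow> prob_vec (p i)"
  shows "prob_vec (\<lambda>a. (\<Sum>i\<in>S. p i a) / real (card S))"
proof -
  have "(\<Sum>a\<in>UNIV. (\<Sum>i\<in>S. p i a) / real (card S)) = (\<Sum>i\<in>S. \<Sum>a\<in>UNIV. p i a) / real (card S)"
    by (simp add: sum.swap[of _ S] flip: sum_divide_distrib)
  also have "\<dots> = 1"
    using assms by (simp add: prob_vec_def)
  finally show ?thesis
    using assms by (auto simp: prob_vec_def intro!: sum_nonneg divide_nonneg_nonneg)
qed

text \<open>A strategy \<open>r\<close> for \<open>B\<close> rounds is simulated in fewer rounds by stretching the
  short sample path: round \<open>l\<close> of the long game sees sample \<open>blk l\<close>.  In its round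
  \<open>j = length xs - 1\<close> the short strategy plays the average allocation of block \<open>j\<close>;
  for an empty block the allocation \<open>r []\<close> is an arbitrary choice.\<close>

definition expand_path :: "(nat \<Rightarrow> nat) \<Rightarrow> nat \<Rightarrow> 'a list \<Rightarrow> 'a list" where
  "expand_path blk B Q = map (\<lambda>l. Q ! blk l) [0..<B]"

definition round_block :: "(nat \<Rightarrow> nat) \<Rightarrow> nat \<Rightarrow> nat \<Rightarrow> nat set" where
  "round_block blk B j = {l\<in>{..<B}. blk l = j}"

definition block_alloc :: "('a list \<Rightarrow> 'k::finite \<Rightarrow> real) \<Rightarrow> (nat \<Rightarrow> nat) \<Rightarrow> nat \<Rightarrow> 'a list \<Rightarrow> 'k \<Rightarrow> real" where
  "block_alloc r blk B xs =
     (let S = round_block blk B (length xs - 1) in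
      if S = {} then r [] else (\<lambda>a. (\<Sum>l\<in>S. r (expand_path blk (Suc l) xs) a) / real (card S)))"

lemma finite_round_block [simp]: "finite (round_block blk B j)"
  by (simp add: round_block_def)

lemma prob_vec_block_alloc:
  assumes "\<And>xs. prob_vec (r xs)"
  shows "prob_vec (block_alloc r blk B xs)"
  unfolding block_alloc_def Let_def using assms by (auto intro: prob_vec_average)

lemma expand_path_in_sample_paths:
  assumes "Q \<in> sample_paths B'" and "\<And>l. l < B \<Longrightarrow> blk l < B'"
  shows "expand_path blk B Q \<in> sample_paths B"
  using assms by (auto simp: sample_paths_def expand_path_def)

lemma take_expand_path: "n \<le> B \<Longrightarrow> take n (expand_path blk B Q) = expand_path blk n Q"
  by (simp add: expand_path_def take_map)

lemma expand_path_take: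
  assumes "mono blk" and "blk l \<le> j"
  shows "expand_path blk (Suc l) (take (Suc j) Q) = expand_path blk (Suc l) Q"
proof -
  have "blk l' < Suc j" if "l' < Suc l" for l'
    using monoD[OF assms(1), of l' l] that assms(2) by simp
  then show ?thesis by (simp add: expand_path_def)
qed

lemma alloc_cost_average:
  "alloc_cost (\<lambda>a. (\<Sum>i\<in>S. w i a) / n) q \<nu> = (\<Sum>i\<in>S. alloc_cost (w i) q \<nu>) / n"
  unfolding alloc_cost_def sum_divide_distrib sum_distrib_right by (subst sum.swap) simp

lemma sum_round_block_alloc_cost:
  assumes "mono blk" and "j < length Q"
  shows "(\<Sum>l\<in>round_block blk B j. alloc_cost (r (take (Suc l) (expand_path blk B Q))) (Q ! j) \<nu>)
    = real (card (round_block blk B j)) * alloc_cost (block_alloc r blk B (take (Suc j) Q)) (Q ! j) \<nu>"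
proof (cases "round_block blk B j = {}")
  case False
  have "expand_path blk (Suc l) (take (Suc j) Q) = take (Suc l) (expand_path blk B Q)"
    if "l \<in> round_block blk B j" for l
    using that by (simp add: round_block_def expand_path_take[OF assms(1)] take_expand_path)
  then have "block_alloc r blk B (take (Suc j) Q)
      = (\<lambda>a. (\<Sum>l\<in>round_block blk B j. r (take (Suc l) (expand_path blk B Q)) a) / real (card (round_block blk B j)))"
    using False assms(2) by (simp add: block_alloc_def Let_def)
  then show ?thesis using False by (simp add: alloc_cost_average)
qed simp

lemma go_cost_expand_path:
  assumes "mono blk" and rng: "\<And>l. l < B \<Longrightarrow> blk l < B'" and "length Q = B'"
  shows "go_cost r B (expand_path blk B Q) \<nu>
    = (\<Sum>j<B'. real (card (round_block blk B j))
         * alloc_cost (block_alloc r blk B (take (Suc j) Q)) (Q ! j) \<nu>) / real B"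
proof -
  have "(\<Sum>l<B. alloc_cost (r (take (Suc l) (expand_path blk B Q))) (expand_path blk B Q ! l) \<nu>)
      = (\<Sum>j<B'. \<Sum>l\<in>round_block blk B j. alloc_cost (r (take (Suc l) (expand_path blk B Q))) (Q ! j) \<nu>)"
    unfolding round_block_def
    by (subst sum.group[symmetric, of "{..<B}" "{..<B'}" blk]) (auto simp: rng expand_path_def)
  then show ?thesis
    using assms by (simp add: go_cost_eq sum_round_block_alloc_cost)
qed

lemma go_cost_expand_path_le:
  assumes "mono blk" and rng: "\<And>l. l < B \<Longrightarrow> blk l < B'"
    and block_size: "\<And>j. j < B' \<Longrightarrow> real (card (round_block blk B j)) * real B' \<le> c * real B"
    and B: "B \<ge> 1" and B': "B' \<ge> 1" and r: "\<And>xs. prob_vec (r xs)"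
    and Q: "Q \<in> sample_paths B'" and \<nu>: "bandit \<nu>"
  shows "go_cost r B (expand_path blk B Q) \<nu> \<le> c * go_cost (block_alloc r blk B) B' Q \<nu>"
proof -
  let ?a = "\<lambda>j. alloc_cost (block_alloc r blk B (take (Suc j) Q)) (Q ! j) \<nu>"
  have alloc: "prob_vec (block_alloc r blk B xs)" for xs
    using r by (rule prob_vec_block_alloc)
  have "?a j \<ge> 0" if "j < B'" for j
    using that Q \<nu> alloc by (intro alloc_cost_nonneg) (auto simp: sample_paths_def prob_vec_def)
  then have term_le: "real (card (round_block blk B j)) / real B * ?a j \<le> c / real B' * ?a j"
    if "j < B'" for j
    using block_size[OF that] that B B' by (intro mult_right_mono) (auto simp: field_simps)
  have "go_cost r B (expand_path blk B Q) \<nu> = (\<Sum>j<B'. real (card (round_block blk B j)) / real B * ?a j)"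
    using Q by (simp add: go_cost_expand_path[OF assms(1) rng] sample_paths_def sum_divide_distrib)
  also have "\<dots> \<le> (\<Sum>j<B'. c / real B' * ?a j)"
    using term_le by (intro sum_mono) simp
  also have "\<dots> = c * go_cost (block_alloc r blk B) B' Q \<nu>"
    by (simp add: go_cost_eq sum_distrib_left sum_divide_distrib)
  finally show ?thesis .
qed

lemma card_round_block_div_le:
  assumes "B' \<ge> 1"
  shows "card (round_block (\<lambda>l. l * B' div B) B j) * B' \<le> B + B'"
proof (cases "round_block (\<lambda>l. l * B' div B) B j = {}")
  case False
  define S where "S = round_block (\<lambda>l. l * B' div B) B j"
  define a where "a = Min S"
  have "a \<in> S" using False by (simp add: a_def S_def)
  have "S \<subseteq> {a..<a + (B div B' + 1)}"
  proof
    fix l assume "l \<in> S"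
    then have "a \<le> l" and "j = a * B' div B" and "j = l * B' div B" and "0 < B"
      using \<open>a \<in> S\<close> by (auto simp: a_def S_def round_block_def)
    have "l * B' < B + j * B"
      unfolding \<open>j = l * B' div B\<close> using \<open>0 < B\<close> by (rule dividend_less_div_times)
    moreover have "j * B \<le> a * B'"
      unfolding \<open>j = a * B' div B\<close> by (rule div_times_less_eq_dividend)
    ultimately have "l * B' < B + a * B'" by linarith
    moreover have "l * B' = (l - a) * B' + a * B'"
      using \<open>a \<le> l\<close> by (simp flip: add_mult_distrib)
    ultimately have "(l - a) * B' < B" by linarith
    also have "B < (B div B' + 1) * B'"
      using assms dividend_less_div_times[of B' B] by simp
    finally have "l - a < B div B' + 1" by (simp only: mult_less_cancel2)
    then show "l \<in> {a..<a + (B div B' + 1)}" using \<open>a \<le> l\<close> by simp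
  qed
  then have "card S \<le> B div B' + 1" using card_mono[of "{a..<a + (B div B' + 1)}" S] by simp
  then have "card S * B' \<le> (B div B' + 1) * B'" by (rule mult_le_mono1)
  also have "\<dots> \<le> B + B'" by simp
  finally show ?thesis unfolding S_def .
qed simp

context bandit_family
begin

lemma strategy_value_le_block_alloc:
  assumes "mono blk" and rng: "\<And>l. l < B \<Longrightarrow> blk l < B'"
    and "\<And>j. j < B' \<Longrightarrow> real (card (round_block blk B j)) * real B' \<le> c * real B"
    and "B \<ge> 1" and "B' \<ge> 1" and "\<And>xs. prob_vec (r xs)" and c: "0 < c"
  shows "strategy_value \<xi> B r J
    \<le> ereal c * strategy_value \<xi> B' (block_alloc r blk B) (\<lambda>Q. J (expand_path blk B Q))"
  unfolding strategy_value_def INF_ereal_cmult[OF c, symmetric]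
proof (intro INF_greatest)
  fix Q \<nu> assume Q: "Q \<in> sample_paths B'" and \<nu>: "\<nu> \<in> (\<Union>i\<in>- {J (expand_path blk B Q)}. \<xi> i)"
  have "expand_path blk B Q \<in> sample_paths B"
    using Q rng by (rule expand_path_in_sample_paths)
  moreover have "go_cost r B (expand_path blk B Q) \<nu> \<le> c * go_cost (block_alloc r blk B) B' Q \<nu>"
    using \<nu> bandits by (intro go_cost_expand_path_le[OF assms(1-6) Q]) auto
  ultimately show "(INF Q\<in>sample_paths B. INF \<nu>\<in>(\<Union>i\<in>- {J Q}. \<xi> i). ereal (go_cost r B Q \<nu>))
      \<le> ereal c * ereal (go_cost (block_alloc r blk B) B' Q \<nu>)"
    using \<nu> by (intro INF_lower2[of "expand_path blk B Q"] INF_lower2[of \<nu>]) simp_all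
qed

lemma R_go_le_by_blocks:
  assumes "mono blk" and "\<And>l. l < B \<Longrightarrow> blk l < B'"
    and "\<And>j. j < B' \<Longrightarrow> real (card (round_block blk B j)) * real B' \<le> c * real B"
    and "B \<ge> 1" and "B' \<ge> 1" and c: "0 < c"
  shows "R_go \<xi> B \<le> ereal c * R_go \<xi> B'"
proof (rule R_go_least)
  fix r :: "('k \<Rightarrow> 'x \<Rightarrow> real) list \<Rightarrow> 'k \<Rightarrow> real" and J
  assume r: "\<And>xs. prob_vec (r xs)"
  have "prob_vec (block_alloc r blk B xs)" for xs using r by (rule prob_vec_block_alloc)
  then show "strategy_value \<xi> B r J \<le> ereal c * R_go \<xi> B'"
    using c by (intro order.trans[OF strategy_value_le_block_alloc[OF assms(1-5) r c]]
        ereal_mult_left_mono strategy_value_le_R_go) auto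
qed

lemma R_go_le_R_go_1:
  assumes "B \<ge> 1"
  shows "R_go \<xi> B \<le> R_go \<xi> 1"
  using R_go_le_by_blocks[where blk = "\<lambda>_. 0" and B' = 1 and c = 1, OF _ _ _ assms]
  by (simp add: round_block_def mono_def one_ereal_def[symmetric])

lemma R_go_le_R_go_mult:
  assumes B: "B \<ge> 1" and B': "B' \<ge> 1"
  shows "R_go \<xi> B \<le> ereal (1 + real B' / real B) * R_go \<xi> B'"
proof (rule R_go_le_by_blocks[OF _ _ _ B B'])
  show "mono (\<lambda>l. l * B' div B)" by (intro monoI div_le_mono mult_le_mono1)
  show "l * B' div B < B'" if "l < B" for l
    using that B' by (intro less_mult_imp_div_less) simp
  show "real (card (round_block (\<lambda>l. l * B' div B) B j)) * real B' \<le> (1 + real B' / real B) * real B"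
    for j
  proof -
    have "real (card (round_block (\<lambda>l. l * B' div B) B j)) * real B' \<le> real B + real B'"
      using card_round_block_div_le[OF B', of B j] by (metis of_nat_add of_nat_le_iff of_nat_mult)
    also have "\<dots> = (1 + real B' / real B) * real B" using B by (simp add: field_simps)
    finally show ?thesis .
  qed
qed (auto intro: add_pos_nonneg)

end


section \<open>Convergence of the game values\<close>

lemma tendsto_INF_if_almost_decreasing:
  fixes f :: "nat \<Rightarrow> ereal"
  assumes le_mult: "\<And>B B'. B \<ge> 1 \<Longrightarrow> B' \<ge> 1 \<Longrightarrow> f B \<le> ereal (1 + real B' / real B) * f B'"
  shows "f \<longlonglongrightarrow> (INF B\<in>{1..}. f B)"
proof -
  let ?L = "INF B\<in>{1..}. f B"
  have "?L \<le> Liminf sequentially f"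
    by (intro Liminf_bounded eventually_sequentiallyI[of 1] INF_lower) auto
  moreover have "Limsup sequentially f \<le> f B'" if "B' \<ge> 1" for B'
  proof -
    have "(\<lambda>B. ereal (1 + real B' / real B) * f B') \<longlonglongrightarrow> ereal (1 + 0) * f B'"
      by (intro tendsto_mult_ereal tendsto_intros lim_const_over_n) auto
    then have "Limsup sequentially (\<lambda>B. ereal (1 + real B' / real B) * f B') = f B'"
      by (simp add: lim_imp_Limsup)
    moreover have "Limsup sequentially f \<le> Limsup sequentially (\<lambda>B. ereal (1 + real B' / real B) * f B')"
      using that by (intro Limsup_mono eventually_sequentiallyI[of 1] le_mult)
    ultimately show ?thesis by simp
  qed
  then have "Limsup sequentially f \<le> ?L" by (intro INF_greatest) auto
  ultimately show ?thesis
    using Liminf_le_Limsup[of sequentially f] by (intro Liminf_eq_Limsup) auto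
qed

lemma (in bandit_family) R_go_inf_eq_INF: "R_go_inf \<xi> = (INF B\<in>{1..}. R_go \<xi> B)"
  unfolding R_go_inf_def by (intro limI tendsto_INF_if_almost_decreasing R_go_le_R_go_mult)

theorem mainTheorem2:
  fixes \<xi> :: "'k::finite \<Rightarrow> ('k \<Rightarrow> 'x::finite \<Rightarrow> real) set"
    and B :: nat
  assumes bandits: "\<And>i \<nu>. \<nu> \<in> \<xi> i \<Longrightarrow> bandit \<nu>"
    and nonempty: "\<And>i. \<xi> i \<noteq> {}"
    and cpt: "\<And>i. compact (\<xi> i)"
    and disj: "\<And>i j. i \<noteq> j \<Longrightarrow> \<xi> i \<inter> \<xi> j = {}"
    and B: "B \<ge> 1"
  shows "R_static \<xi> \<le> R_go_inf \<xi> \<and> R_go_inf \<xi> \<le> R_go \<xi> B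
       \<and> R_go \<xi> B \<le> R_go \<xi> 1 \<and> R_go \<xi> 1 \<le> R_ub \<xi>"
proof -
  interpret bandit_family \<xi> by unfold_locales (fact bandits)
  have "R_static \<xi> \<le> R_go_inf \<xi>"
    unfolding R_go_inf_eq_INF by (rule INF_greatest) (simp add: R_static_le_R_go)
  moreover have "R_go_inf \<xi> \<le> R_go \<xi> B"
    unfolding R_go_inf_eq_INF using B by (intro INF_lower) simp
  ultimately show ?thesis
    using R_go_le_R_go_1[OF B] R_go_1_le_R_ub by blast
qed

end
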